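(* Let $(\chi,u)$ be a rooted chirotope and let $m$ be the minimal degree of $v$ in a weak triangulation of $(\chi,u)$. Then a weak triangulation $\Delta$ of $(\chi,u)$ is the extension of a triangulation of $\chi$ if and only if $v$ has degree $m$ in $\Delta$.
   Context: A chirotope on a finite set $E$ is a map $\chi$ from ordered triples of distinct elements to $\{-1,1\}$ satisfying alternating symmetry, interiority and transitivity axioms. A rooted chirotope $(\chi,u)$ is a chirotope $\chi$ on $X\cup\{u\}$ with $u$ an extreme element (there is $y\neq u$ with $\chi(u,y,z)$ constant over all other $z$). A segment is a pair of distinct elements; two segments sharing an endpoint never cross, and segments $xy$, $zt$ with four distinct endpoints cross iff $\chi(x,y,z)=-\chi(x,y,t)$ and $\chi(z,t,x)=-\chi(z,t,y)$. A triangulation of $\chi$ is an inclusion-maximal set of pairwise non-crossing segments. Add a new element $v$ and set $\chi(x,y,v)=-\chi(x,y,u)$ for $x,y\in X$ ($\chi(x,u,v)$ stays undefined). For segments with endpoints in $X\cup\{u,v\}$ other than $uv$, crossing is defined by the same rule, where a segment containing $u$ and a segment containing $v$ are never crossing (so only defined values are used). A weak triangulation of $(\chi,u)$ is a maximal non-crossing collection of segments with endpoints in $X\cup\{u,v\}$ not containing the segment $uv$. Every triangulation $\Delta$ of $\chi$ extends uniquely to a weak triangulation, its extension, obtained by adding all segments $vx$ ($x\in X$) crossing no segment of $\Delta$. The degree of a vertex in $\Delta$ is the number of segments of $\Delta$ incident to it. *)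

theory Defs
  imports Main
begin

text \<open>A chirotope on a finite set E: a map on ordered triples of distinct elements
  of E with values in {-1,1} (values on other triples are irrelevant), satisfying
  alternating symmetry, interiority and transitivity (Knuth's CC-system axioms).\<close>

definition chirotope :: "('a \<Rightarrow> 'a \<Rightarrow> 'a \<Rightarrow> int) \<Rightarrow> 'a set \<Rightarrow> bool" where
  "chirotope chi E \<longleftrightarrow> finite E \<and>
     (\<forall>a\<in>E. \<forall>b\<in>E. \<forall>c\<in>E. distinct [a,b,c] \<longrightarrow>
        chi a b c \<in> {-1, 1} \<and> chi a b c = chi b c a \<and> chi a c b = - chi a b c) \<and>
     (\<forall>p\<in>E. \<forall>q\<in>E. \<forall>r\<in>E. \<forall>t\<in>E. distinct [p,q,r,t] \<longrightarrow>
        chi t q r = 1 \<longrightarrow> chi p t r = 1 \<longrightarrow> chi p q t = 1 \<longrightarrow> chi p q r = 1) \<and>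
     (\<forall>p\<in>E. \<forall>q\<in>E. \<forall>r\<in>E. \<forall>s\<in>E. \<forall>t\<in>E. distinct [p,q,r,s,t] \<longrightarrow>
        chi t s p = 1 \<longrightarrow> chi t s q = 1 \<longrightarrow> chi t s r = 1 \<longrightarrow>
        chi t p q = 1 \<longrightarrow> chi t q r = 1 \<longrightarrow> chi t p r = 1)"

text \<open>Rooted chirotope (chi,u): chirotope on X \<union> {u}, u \<notin> X, u extreme.\<close>
definition rooted_chirotope :: "('a \<Rightarrow> 'a \<Rightarrow> 'a \<Rightarrow> int) \<Rightarrow> 'a set \<Rightarrow> 'a \<Rightarrow> bool" where
  "rooted_chirotope chi X u \<longleftrightarrow> u \<notin> X \<and> chirotope chi (insert u X) \<and>
     (\<exists>y\<in>X. \<exists>s. \<forall>z\<in>X - {y}. chi u y z = s)"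

definition segment :: "'a set \<Rightarrow> 'a set \<Rightarrow> bool" where
  "segment E s \<longleftrightarrow> (\<exists>x\<in>E. \<exists>y\<in>E. x \<noteq> y \<and> s = {x, y})"

definition crossing :: "('a \<Rightarrow> 'a \<Rightarrow> 'a \<Rightarrow> int) \<Rightarrow> 'a set \<Rightarrow> 'a set \<Rightarrow> bool" where
  "crossing chi s1 s2 \<longleftrightarrow> (\<exists>x y z t. s1 = {x, y} \<and> s2 = {z, t} \<and> distinct [x,y,z,t] \<and>
      chi x y z = - chi x y t \<and> chi z t x = - chi z t y)"

definition triangulation :: "('a \<Rightarrow> 'a \<Rightarrow> 'a \<Rightarrow> int) \<Rightarrow> 'a set \<Rightarrow> 'a set set \<Rightarrow> bool" where
  "triangulation chi E T \<longleftrightarrow>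
     (\<forall>s\<in>T. segment E s) \<and> (\<forall>s1\<in>T. \<forall>s2\<in>T. \<not> crossing chi s1 s2) \<and>
     (\<forall>s. segment E s \<and> s \<notin> T \<longrightarrow> (\<exists>s'\<in>T. crossing chi s s' \<or> crossing chi s' s))"

text \<open>Extension of chi by the new element v with chi(x,y,v) = -chi(x,y,u) for x,y in X,
  extended to all positions by alternating symmetry (chi(v,y,z) = chi(y,z,v),
  chi(x,v,z) = chi(z,x,v)).\<close>
definition chi_v :: "('a \<Rightarrow> 'a \<Rightarrow> 'a \<Rightarrow> int) \<Rightarrow> 'a \<Rightarrow> 'a \<Rightarrow> 'a \<Rightarrow> 'a \<Rightarrow> 'a \<Rightarrow> int" where
  "chi_v chi u v x y z =
     (if z = v then - chi x y u
      else if x = v then - chi y z u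
      else if y = v then - chi z x u
      else chi x y z)"

definition wcrossing :: "('a \<Rightarrow> 'a \<Rightarrow> 'a \<Rightarrow> int) \<Rightarrow> 'a \<Rightarrow> 'a \<Rightarrow> 'a set \<Rightarrow> 'a set \<Rightarrow> bool" where
  "wcrossing chi u v s1 s2 \<longleftrightarrow>
     \<not> (u \<in> s1 \<and> v \<in> s2) \<and> \<not> (v \<in> s1 \<and> u \<in> s2) \<and> crossing (chi_v chi u v) s1 s2"

definition weak_segment :: "'a set \<Rightarrow> 'a \<Rightarrow> 'a \<Rightarrow> 'a set \<Rightarrow> bool" where
  "weak_segment X u v s \<longleftrightarrow> segment (X \<union> {u, v}) s \<and> s \<noteq> {u, v}"

definition weak_triangulation ::
    "('a \<Rightarrow> 'a \<Rightarrow> 'a \<Rightarrow> int) \<Rightarrow> 'a set \<Rightarrow> 'a \<Rightarrow> 'a \<Rightarrow> 'a set set \<Rightarrow> bool" where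
  "weak_triangulation chi X u v D \<longleftrightarrow>
     (\<forall>s\<in>D. weak_segment X u v s) \<and> (\<forall>s1\<in>D. \<forall>s2\<in>D. \<not> wcrossing chi u v s1 s2) \<and>
     (\<forall>s. weak_segment X u v s \<and> s \<notin> D \<longrightarrow>
        (\<exists>s'\<in>D. wcrossing chi u v s s' \<or> wcrossing chi u v s' s))"

definition extension ::
    "('a \<Rightarrow> 'a \<Rightarrow> 'a \<Rightarrow> int) \<Rightarrow> 'a set \<Rightarrow> 'a \<Rightarrow> 'a \<Rightarrow> 'a set set \<Rightarrow> 'a set set" where
  "extension chi X u v T = T \<union>
     {{v, x} | x. x \<in> X \<and> (\<forall>s\<in>T. \<not> wcrossing chi u v {v, x} s \<and> \<not> wcrossing chi u v s {v, x})}"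

definition degree :: "'a set set \<Rightarrow> 'a \<Rightarrow> nat" where
  "degree D w = card {s \<in> D. w \<in> s}"

definition min_v_degree :: "('a \<Rightarrow> 'a \<Rightarrow> 'a \<Rightarrow> int) \<Rightarrow> 'a set \<Rightarrow> 'a \<Rightarrow> 'a \<Rightarrow> nat" where
  "min_v_degree chi X u v = Min {degree D v | D. weak_triangulation chi X u v D}"

end

theory Submission
  imports Defs
begin

text \<open>
  The new element v lies on the opposite side from u of every line through two points of X,
  so vx crosses a segment ab of X exactly when ab blocks x as seen from u, i.e. when ab crosses
  the ray from u through x beyond x. Call x visible when no segment of X blocks it.

  Nothing crosses vx for visible x, so every weak triangulation contains these visible edges and
  has degree at least the number of visible points at v. If x is blocked at all, it is blocked
  by an edge cd of the convex hull of X with all of X on the side of u: the edge through which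
  the ray leaves the hull, found by sweeping X in angular order around the extreme element u.
  Such an edge lies in every triangulation T, so the extension of T adds exactly the visible
  edges and attains the lower bound. Conversely, a weak triangulation of minimal degree has
  exactly the visible edges at v, and removing them leaves a triangulation whose extension it is.
\<close>

section \<open>Chirotope axioms\<close>

lemma chirotope_finite: "chirotope chi E \<Longrightarrow> finite E"
  unfolding chirotope_def by blast

lemma chirotope_alternating_axiom:
  assumes "chirotope chi E" "a \<in> E" "b \<in> E" "c \<in> E" "distinct [a,b,c]"
  shows "chi a b c \<in> {-1, 1} \<and> chi a b c = chi b c a \<and> chi a c b = - chi a b c"
proof -
  have "\<forall>a\<in>E. \<forall>b\<in>E. \<forall>c\<in>E. distinct [a,b,c] \<longrightarrow>
        chi a b c \<in> {-1, 1} \<and> chi a b c = chi b c a \<and> chi a c b = - chi a b c"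
    using assms(1) unfolding chirotope_def by (elim conjE)
  then show ?thesis using assms(2-5) by blast
qed

lemma chirotope_sign:
  assumes "chirotope chi E" "a \<in> E" "b \<in> E" "c \<in> E" "distinct [a,b,c]"
  shows "chi a b c = 1 \<or> chi a b c = -1"
proof -
  have "chi a b c \<in> {-1, 1}" using chirotope_alternating_axiom[OF assms] by blast
  then show ?thesis by auto
qed

lemma chirotope_alternating:
  assumes "chirotope chi E" "a \<in> E" "b \<in> E" "c \<in> E" "distinct [a,b,c]"
  shows "chi b c a = chi a b c" "chi c a b = chi a b c" "chi a c b = - chi a b c"
    "chi b a c = - chi a b c" "chi c b a = - chi a b c"
proof -
  note alt = chirotope_alternating_axiom[OF assms(1)]
  have "distinct [b,c,a]" "distinct [b,a,c]" "distinct [c,b,a]" using assms(5) by auto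
  with alt[OF assms(2-5)] alt[OF assms(3,4,2)] alt[OF assms(3,2,4)] alt[OF assms(4,3,2)]
  show "chi b c a = chi a b c" "chi c a b = chi a b c" "chi a c b = - chi a b c"
    "chi b a c = - chi a b c" "chi c b a = - chi a b c" by linarith+
qed

lemma chirotope_interiority:
  assumes "chirotope chi E" "p \<in> E" "q \<in> E" "r \<in> E" "t \<in> E" "distinct [p,q,r,t]"
    "chi t q r = 1" "chi p t r = 1" "chi p q t = 1"
  shows "chi p q r = 1"
  using assms unfolding chirotope_def by blast

lemma chirotope_transitivity:
  assumes "chirotope chi E" "p \<in> E" "q \<in> E" "r \<in> E" "s \<in> E" "t \<in> E" "distinct [p,q,r,s,t]"
    "chi t s p = 1" "chi t s q = 1" "chi t s r = 1" "chi t p q = 1" "chi t q r = 1"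
  shows "chi t p r = 1"
  using assms unfolding chirotope_def by blast

lemma chirotope_triple:
  assumes "chirotope chi E" "a \<in> E" "b \<in> E" "c \<in> E" "distinct [a,b,c]"
  shows "(chi a b c = 1 \<or> chi a b c = -1) \<and> chi b c a = chi a b c \<and> chi c a b = chi a b c \<and>
    chi a c b = - chi a b c \<and> chi b a c = - chi a b c \<and> chi c b a = - chi a b c"
  using chirotope_sign[OF assms] chirotope_alternating[OF assms] by blast

text \<open>Knuth's axiom 5', transitivity on the other side of ts.\<close>

lemma chirotope_transitivity_dual:
  assumes ch: "chirotope chi E" and E: "p \<in> E" "q \<in> E" "r \<in> E" "s \<in> E" "t \<in> E"
    and dist: "distinct [p,q,r,s,t]"
    and "chi t p s = 1" "chi t q s = 1" "chi t r s = 1" "chi t q p = 1" "chi t r q = 1"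
  shows "chi t r p = 1"
proof -
  note tri = chirotope_triple[OF ch] and A4 = chirotope_interiority[OF ch]
    and A5 = chirotope_transitivity[OF ch]
  have d: "distinct [p,q,r]" "distinct [p,q,s]" "distinct [p,q,t]" "distinct [p,r,s]"
    "distinct [p,r,t]" "distinct [p,s,t]" "distinct [q,r,s]" "distinct [q,r,t]"
    "distinct [q,s,t]" "distinct [r,s,t]"
    using dist by auto
  have "chi r q t = 1 \<Longrightarrow> chi p r t = 1 \<Longrightarrow> chi p q r = 1 \<Longrightarrow> chi p q t = 1"
    using A4[of p q t r] E dist by auto
  moreover have "chi q r s = 1 \<Longrightarrow> chi p q s = 1 \<Longrightarrow> chi p r q = 1 \<Longrightarrow> chi p r s = 1"
    using A4[of p r s q] E dist by auto
  moreover have "chi s t p = 1 \<Longrightarrow> chi s t r = 1 \<Longrightarrow> chi s t q = 1 \<Longrightarrow> chi s p r = 1 \<Longrightarrow>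
      chi s r q = 1 \<Longrightarrow> chi s p q = 1"
    using A5[of p r q t s] E dist by auto
  moreover have "chi r q p = 1 \<Longrightarrow> chi r q s = 1 \<Longrightarrow> chi r q t = 1 \<Longrightarrow> chi r p s = 1 \<Longrightarrow>
      chi r s t = 1 \<Longrightarrow> chi r p t = 1"
    using A5[of p s t q r] E dist by auto
  moreover have "chi p r q = 1 \<Longrightarrow> chi p r s = 1 \<Longrightarrow> chi p r t = 1 \<Longrightarrow> chi p q s = 1 \<Longrightarrow>
      chi p s t = 1 \<Longrightarrow> chi p q t = 1"
    using A5[of q s t r p] E dist by auto
  moreover have "chi q p r = 1 \<Longrightarrow> chi q p s = 1 \<Longrightarrow> chi q p t = 1 \<Longrightarrow> chi q r s = 1 \<Longrightarrow>
      chi q s t = 1 \<Longrightarrow> chi q r t = 1"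
    using A5[of r s t p q] E dist by auto
  ultimately show ?thesis
    using tri[OF E(1,2,3) d(1)] tri[OF E(1,2,4) d(2)] tri[OF E(1,2,5) d(3)]
      tri[OF E(1,3,4) d(4)] tri[OF E(1,3,5) d(5)] tri[OF E(1,4,5) d(6)]
      tri[OF E(2,3,4) d(7)] tri[OF E(2,3,5) d(8)] tri[OF E(2,4,5) d(9)] tri[OF E(3,4,5) d(10)]
      assms(8-)
    by smt
qed

lemma chirotope_uminus:
  assumes ch: "chirotope chi E"
  shows "chirotope (\<lambda>a b c. - chi a b c) E"
  unfolding chirotope_def
proof (intro conjI)
  note alt = chirotope_alternating[OF ch]
  show "finite E" using ch by (rule chirotope_finite)
  show "\<forall>a\<in>E. \<forall>b\<in>E. \<forall>c\<in>E. distinct [a,b,c] \<longrightarrow>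
      - chi a b c \<in> {-1, 1} \<and> - chi a b c = - chi b c a \<and> - chi a c b = - (- chi a b c)"
  proof (intro ballI impI)
    fix a b c assume "a \<in> E" "b \<in> E" "c \<in> E" "distinct [a,b,c]"
    then have "chi a b c \<in> {-1, 1}" "chi a b c = chi b c a" "chi a c b = - chi a b c"
      using chirotope_alternating_axiom[OF ch] by blast+
    then show "- chi a b c \<in> {-1, 1} \<and> - chi a b c = - chi b c a \<and> - chi a c b = - (- chi a b c)"
      by auto
  qed
  show "\<forall>p\<in>E. \<forall>q\<in>E. \<forall>r\<in>E. \<forall>t\<in>E. distinct [p,q,r,t] \<longrightarrow>
      - chi t q r = 1 \<longrightarrow> - chi p t r = 1 \<longrightarrow> - chi p q t = 1 \<longrightarrow> - chi p q r = 1"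
  proof (intro ballI impI)
    fix p q r t assume E: "p \<in> E" "q \<in> E" "r \<in> E" "t \<in> E" and d: "distinct [p,q,r,t]"
      and h: "- chi t q r = 1" "- chi p t r = 1" "- chi p q t = 1"
    have "distinct [t,q,r]" "distinct [p,q,t]" "distinct [p,t,r]" "distinct [p,q,r]" using d by auto
    then have "chi t r q = 1" "chi p t q = 1" "chi p r t = 1"
      using alt(3)[of t q r] alt(3)[of p q t] alt(3)[of p t r] E h by auto
    then have "chi p r q = 1" using chirotope_interiority[OF ch, of p r q t] E d by auto
    then show "- chi p q r = 1" using alt(3)[of p q r] E \<open>distinct [p,q,r]\<close> by auto
  qed
  show "\<forall>p\<in>E. \<forall>q\<in>E. \<forall>r\<in>E. \<forall>s\<in>E. \<forall>t\<in>E. distinct [p,q,r,s,t] \<longrightarrow>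
      - chi t s p = 1 \<longrightarrow> - chi t s q = 1 \<longrightarrow> - chi t s r = 1 \<longrightarrow>
      - chi t p q = 1 \<longrightarrow> - chi t q r = 1 \<longrightarrow> - chi t p r = 1"
  proof (intro ballI impI)
    fix p q r s t assume E: "p \<in> E" "q \<in> E" "r \<in> E" "s \<in> E" "t \<in> E"
      and d: "distinct [p,q,r,s,t]"
      and h: "- chi t s p = 1" "- chi t s q = 1" "- chi t s r = 1" "- chi t p q = 1" "- chi t q r = 1"
    have "distinct [t,s,p]" "distinct [t,s,q]" "distinct [t,s,r]" "distinct [t,p,q]"
      "distinct [t,q,r]" "distinct [t,p,r]" using d by auto
    then have "chi t p s = 1" "chi t q s = 1" "chi t r s = 1" "chi t q p = 1" "chi t r q = 1"
      using alt(3)[of t s p] alt(3)[of t s q] alt(3)[of t s r] alt(3)[of t p q] alt(3)[of t q r] E h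
      by auto
    then have "chi t r p = 1" using chirotope_transitivity_dual[OF ch, of p q r s t] E d by auto
    then show "- chi t p r = 1" using alt(3)[of t p r] E \<open>distinct [t,p,r]\<close> by auto
  qed
qed

lemma finite_total_trans_has_greatest:
  assumes "finite A" "A \<noteq> {}"
    and trans: "\<And>p q r. p \<in> A \<Longrightarrow> q \<in> A \<Longrightarrow> r \<in> A \<Longrightarrow> R p q \<Longrightarrow> R q r \<Longrightarrow> R p r"
    and total: "\<And>p q. p \<in> A \<Longrightarrow> q \<in> A \<Longrightarrow> p \<noteq> q \<Longrightarrow> R p q \<or> R q p"
  shows "\<exists>m\<in>A. \<forall>q\<in>A - {m}. R q m"
  using assms
proof (induction A rule: finite_ne_induct)
  case (singleton x)
  then show ?case by auto
next
  case (insert x F)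
  then obtain m where m: "m \<in> F" "\<forall>q\<in>F - {m}. R q m" by blast
  show ?case
  proof (cases "R m x")
    case True
    have "R q x" if "q \<in> F" for q
    proof (cases "q = m")
      case False
      then have "R q m" using m that by blast
      with \<open>R m x\<close> show ?thesis using insert.prems(1)[of q m x] m that by blast
    qed (use True in simp)
    then show ?thesis by blast
  next
    case False
    then have "R x m" using insert.prems(2)[of x m] m insert.hyps by auto
    then show ?thesis using m by blast
  qed
qed

section \<open>Blocking segments and hull edges\<close>

text \<open>ab blocks x when it crosses the ray from u through x beyond x: a and b lie on different
  sides of the line ux, and x lies on the same side of ab as u. By wcrossing_v_iff_blocks
  below, this is exactly when vx crosses ab.\<close>

definition blocks :: "('a \<Rightarrow> 'a \<Rightarrow> 'a \<Rightarrow> int) \<Rightarrow> 'a \<Rightarrow> 'a \<Rightarrow> 'a \<Rightarrow> 'a \<Rightarrow> bool" where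
  "blocks chi u a b x \<longleftrightarrow> distinct [x,a,b] \<and> chi u x a = - chi u x b \<and> chi a b x = chi a b u"

definition hull_edge :: "('a \<Rightarrow> 'a \<Rightarrow> 'a \<Rightarrow> int) \<Rightarrow> 'a \<Rightarrow> 'a set \<Rightarrow> 'a \<Rightarrow> 'a \<Rightarrow> bool" where
  "hull_edge chi u S c d \<longleftrightarrow> c \<noteq> d \<and> (\<forall>q\<in>S - {c,d}. chi c d q = chi c d u)"

locale angular_order =
  fixes chi :: "'a \<Rightarrow> 'a \<Rightarrow> 'a \<Rightarrow> int" and X :: "'a set" and u y0 :: 'a
  assumes chirotope: "chirotope chi (insert u X)" and root_notin: "u \<notin> X"
    and first_in: "y0 \<in> X" and first: "\<And>z. z \<in> X \<Longrightarrow> z \<noteq> y0 \<Longrightarrow> chi u y0 z = 1"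
begin

definition before :: "'a \<Rightarrow> 'a \<Rightarrow> bool" (infix "\<prec>" 50) where
  "p \<prec> q \<longleftrightarrow> p \<in> X \<and> q \<in> X \<and> p \<noteq> q \<and> chi u p q = 1"

lemma rotate:
  assumes "a \<in> insert u X" "b \<in> insert u X" "c \<in> insert u X" "distinct [a,b,c]"
  shows "chi b c a = chi a b c" "chi c a b = chi a b c"
  using chirotope_alternating[OF chirotope assms] by simp_all

lemma swap_eq_1_iff:
  assumes "a \<in> insert u X" "b \<in> insert u X" "c \<in> insert u X" "distinct [a,b,c]"
  shows "chi a c b = 1 \<longleftrightarrow> chi a b c \<noteq> 1"
  using chirotope_alternating[OF chirotope assms] chirotope_sign[OF chirotope assms] by auto

lemma beforeD:
  assumes "p \<prec> q"
  shows "p \<in> X" "q \<in> X" "p \<noteq> q" "u \<noteq> p" "u \<noteq> q"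
    "chi u p q = 1" "chi p q u = 1" "chi q u p = 1" "chi u q p = -1"
proof -
  show pq: "p \<in> X" "q \<in> X" "p \<noteq> q" and "chi u p q = 1" using assms unfolding before_def by auto
  moreover show "u \<noteq> p" "u \<noteq> q" using pq root_notin by auto
  ultimately show "chi p q u = 1" "chi q u p = 1" "chi u q p = -1"
    using rotate[of u p q] chirotope_alternating(3)[OF chirotope, of u p q] by auto
qed

lemma before_asym: "p \<prec> q \<Longrightarrow> \<not> q \<prec> p"
  using beforeD(1-5)[of p q] swap_eq_1_iff[of u p q] unfolding before_def by auto

lemma before_total: "p \<in> X \<Longrightarrow> q \<in> X \<Longrightarrow> p \<noteq> q \<Longrightarrow> p \<prec> q \<or> q \<prec> p"
  using swap_eq_1_iff[of u p q] root_notin unfolding before_def by auto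

lemma before_trans:
  assumes pq: "p \<prec> q" and qr: "q \<prec> r"
  shows "p \<prec> r"
proof -
  note D = beforeD[OF pq] beforeD[OF qr]
  have pr: "p \<noteq> r" using before_asym pq qr by blast
  have "chi u p r = 1"
  proof (cases "y0 \<in> {p,q,r}")
    case True
    then show ?thesis using first D pr swap_eq_1_iff[of u p q] swap_eq_1_iff[of u q r] by auto
  next
    case False
    then show ?thesis
      using chirotope_transitivity[OF chirotope, of p q r y0 u] first_in first root_notin D pr
      by auto
  qed
  then show ?thesis using D pr unfolding before_def by auto
qed

text \<open>Transitivity at apex t with reference s, applied to u, q and r.\<close>

lemma sweep:
  assumes qt: "q \<prec> t" and ts: "t \<prec> s" and tr: "t \<prec> r" and "r \<noteq> s"
    and tsq: "chi t s q = 1" and tsr: "chi t s r = 1"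
  shows "chi q t r = 1"
proof (rule ccontr)
  note D = beforeD[OF qt] beforeD[OF ts] beforeD[OF tr]
  assume "chi q t r \<noteq> 1"
  have "q \<noteq> r" "q \<noteq> s" using before_trans[OF qt tr] before_trans[OF qt ts] beforeD(3) by auto
  with \<open>chi q t r \<noteq> 1\<close> have "chi t q r = 1"
    using rotate(1)[of q t r] swap_eq_1_iff[of t q r] D \<open>q \<noteq> r\<close> by auto
  then have "chi t u r = 1"
    using chirotope_transitivity[OF chirotope, of u q r s t] D tsq tsr \<open>q \<noteq> r\<close> \<open>q \<noteq> s\<close> \<open>r \<noteq> s\<close>
    by auto
  then show False using swap_eq_1_iff[of t r u] D by auto
qed

lemma sweep_upto:
  assumes "q \<prec> t" "t \<prec> s" "t \<prec> r" "chi t s q = 1" "r = s \<or> chi t s r = 1"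
  shows "chi q t r = 1"
proof (cases "r = s")
  case True
  have "q \<noteq> s" using before_trans[OF assms(1,2)] beforeD(3) by blast
  then show ?thesis
    using True assms(4) rotate(1)[of q t s] beforeD[OF assms(1)] beforeD[OF assms(2)] by auto
qed (use sweep assms in blast)

lemma apex_orientation_trans:
  assumes "p \<prec> t" "q \<prec> t" "r \<prec> t" "distinct [p,q,r]" "chi t p q = 1" "chi t q r = 1"
  shows "chi t p r = 1"
  using chirotope_transitivity[OF chirotope, of p q r u t] assms beforeD[OF assms(1)]
    beforeD[OF assms(2)] beforeD[OF assms(3)] by auto

lemma finite_has_last:
  assumes "finite S" "S \<subseteq> X" "S \<noteq> {}"
  shows "\<exists>y\<in>S. \<forall>q\<in>S - {y}. q \<prec> y"
proof (rule finite_total_trans_has_greatest)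
  show "p \<prec> q \<or> q \<prec> p" if "p \<in> S" "q \<in> S" "p \<noteq> q" for p q
    using before_total that assms(2) by blast
qed (use assms before_trans in auto)

lemma finite_has_extreme_from:
  assumes "finite P" "P \<noteq> {}" "\<And>p. p \<in> P \<Longrightarrow> p \<prec> y"
  shows "\<exists>m\<in>P. \<forall>q\<in>P - {m}. chi m y q = 1"
proof -
  have PX: "P \<subseteq> X" "y \<in> X" "y \<notin> P" using assms beforeD by blast+
  have "\<exists>m\<in>P. \<forall>q\<in>P - {m}. chi y q m = 1"
  proof (rule finite_total_trans_has_greatest)
    fix p q r assume "p \<in> P" "q \<in> P" "r \<in> P" "chi y p q = 1" "chi y q r = 1"
    then show "chi y p r = 1"
      using apex_orientation_trans[of p y q r] swap_eq_1_iff[of y p q] assms(3) PX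
      by (cases "p = q \<or> q = r \<or> p = r") auto
  next
    fix p q assume "p \<in> P" "q \<in> P" "p \<noteq> q"
    then show "chi y p q = 1 \<or> chi y q p = 1"
      using swap_eq_1_iff[of y p q] PX by auto
  qed (use assms in auto)
  then obtain m where m: "m \<in> P" "\<forall>q\<in>P - {m}. chi y q m = 1" by blast
  have "chi m y q = 1" if "q \<in> P - {m}" for q
    using m rotate(2)[of y q m] PX that by auto
  with m(1) show ?thesis by blast
qed

text \<open>cd is the edge of the hull of S through which the ray from u through x leaves: c and d
  lie on either side of the ray, and x and all of S lie on the side of cd containing u
  (which is where chi c d _ = 1, as c \<prec> d).\<close>

definition exit_edge :: "'a set \<Rightarrow> 'a \<Rightarrow> 'a \<Rightarrow> 'a \<Rightarrow> bool" where
  "exit_edge S x c d \<longleftrightarrow>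
     c \<in> S \<and> d \<in> S \<and> c \<prec> x \<and> x \<prec> d \<and> chi c d x = 1 \<and> (\<forall>q\<in>S - {c,d}. chi c d q = 1)"

lemma blocked_not_extreme:
  assumes ax: "a \<prec> x" and xb: "x \<prec> b" and abx: "chi a b x = 1"
    and "x \<prec> y" "chi x y a = 1" "b = y \<or> chi x y b = 1"
  shows False
proof -
  have "chi a x b = 1" using sweep_upto assms by blast
  moreover have "a \<noteq> b" using before_trans[OF ax xb] beforeD(3) by blast
  ultimately show False using swap_eq_1_iff[of a b x] abx beforeD[OF ax] beforeD[OF xb] by auto
qed

lemma exit_shift:
  assumes ax: "a \<prec> x" and xm: "x \<prec> m" and mb: "m \<prec> b" and abx: "chi a b x = 1"
    and "m \<prec> y" "chi m y x = 1" "b = y \<or> chi m y b = 1"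
  shows "chi a m x = 1"
proof (rule ccontr)
  assume "chi a m x \<noteq> 1"
  note D = beforeD[OF ax] beforeD[OF xm] beforeD[OF mb]
  have xb: "x \<prec> b" and am: "a \<prec> m" and ab: "a \<prec> b"
    using before_trans ax xm mb by blast+
  have "chi x m b = 1" using sweep_upto[of x m y b] assms by blast
  moreover have "chi x m a = 1"
    using \<open>chi a m x \<noteq> 1\<close> rotate(1)[of a x m] swap_eq_1_iff[of a m x] D beforeD(3)[OF am]
    by auto
  ultimately have "chi a x b = 1" using sweep[OF ax xm xb] D by auto
  then show False using swap_eq_1_iff[of a b x] abx D beforeD(3)[OF ab] beforeD(3)[OF xb] by auto
qed

lemma left_of_edge_beyond:
  assumes cd: "c \<prec> d" and dm: "d = m \<or> (d \<prec> m \<and> chi c d m = 1 \<and> chi m y d = 1)"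
    and my: "m \<prec> y" and myc: "chi m y c = 1" and mq: "m \<prec> q" and q: "q = y \<or> chi m y q = 1"
  shows "chi c d q = 1"
  using dm
proof
  assume "d = m"
  then show ?thesis using sweep_upto[of c m y q] cd my myc mq q by simp
next
  assume d: "d \<prec> m \<and> chi c d m = 1 \<and> chi m y d = 1"
  have "chi d m q = 1" using sweep_upto[of d m y q] d my mq q by auto
  moreover have "chi d m c = 1"
  proof -
    have "c \<prec> m" using before_trans cd d by blast
    then show ?thesis using rotate(1)[of c d m] d beforeD[OF cd] beforeD[of c m] beforeD(3)[of d m]
      by auto
  qed
  moreover have "d \<prec> q" "q \<noteq> m" using before_trans d mq beforeD(3) by blast+
  ultimately show ?thesis using sweep[of c d m q] cd d by auto
qed

lemma exit_edge_extend:
  assumes cd: "exit_edge {q \<in> S. q = m \<or> q \<prec> m} x c d" and "S \<subseteq> X" "m \<in> S"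
    and xm: "x \<prec> m" and my: "m \<prec> y" and left: "\<And>q. q \<in> S \<Longrightarrow> q \<noteq> m \<Longrightarrow> q = y \<or> chi m y q = 1"
  shows "exit_edge S x c d"
proof -
  define S' where "S' = {q \<in> S. q = m \<or> q \<prec> m}"
  from cd have cS: "c \<in> S'" "d \<in> S'" and cx: "c \<prec> x" and xd: "x \<prec> d"
    and cdx: "chi c d x = 1" and cdq: "\<And>q. q \<in> S' - {c,d} \<Longrightarrow> chi c d q = 1"
    unfolding exit_edge_def S'_def by blast+
  have S'S: "S' \<subseteq> S" unfolding S'_def by blast
  have cm: "c \<prec> m" and cd': "c \<prec> d" using before_trans cx xm xd by blast+
  have myc: "chi m y c = 1"
    using left[of c] cS S'S beforeD(3)[OF cm] before_trans[OF cm my] beforeD(3) by blast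
  have dm: "d = m \<or> (d \<prec> m \<and> chi c d m = 1 \<and> chi m y d = 1)"
  proof (cases "d = m")
    case False
    then have dm: "d \<prec> m" using cS unfolding S'_def by blast
    have "chi c d m = 1" using cdq[of m] assms(3) beforeD(3)[OF cm] False unfolding S'_def by blast
    moreover have "chi m y d = 1"
      using left[of d] cS S'S False before_trans[OF dm my] beforeD(3) by blast
    ultimately show ?thesis using dm by blast
  qed simp
  have "chi c d q = 1" if q: "q \<in> S - S'" for q
  proof -
    have mq: "m \<prec> q" using before_total[of m q] q assms(2,3) unfolding S'_def by blast
    have "q = y \<or> chi m y q = 1" using left[of q] q beforeD(3)[OF mq] by blast
    then show ?thesis using left_of_edge_beyond[OF cd' dm my myc mq] by blast
  qed
  then show ?thesis using cS S'S cx xd cdx cdq unfolding exit_edge_def by blast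
qed

text \<open>Let y be the last point of S and m its neighbour on the hull, with all
  of S on the side of my containing u. If m precedes x, then my is the exit edge, and m = x
  is impossible. Otherwise recurse on the points up to m, after replacing b by m if needed
  (exit_shift), and extend the exit edge found there to the points beyond m
  (exit_edge_extend).\<close>

lemma exit_edge_exists:
  assumes "finite S" "S \<subseteq> X" "x \<in> S" "a \<in> S" "b \<in> S" "a \<prec> x" "x \<prec> b" "chi a b x = 1"
  shows "\<exists>c d. exit_edge S x c d"
  using assms
proof (induction "card S" arbitrary: S a b rule: less_induct)
  case less
  note S = less.prems(1-5) and ax = less.prems(6) and xb = less.prems(7) and abx = less.prems(8)
  obtain y where y: "y \<in> S" "\<And>q. q \<in> S - {y} \<Longrightarrow> q \<prec> y"
    using finite_has_last[OF S(1,2)] S(3) by blast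
  have "b = y \<or> b \<prec> y" using y(2)[of b] S by blast
  then have xy: "x \<prec> y" using xb before_trans by blast
  have ay: "a \<prec> y" using ax xy before_trans by blast
  have "S - {y} \<noteq> {}" using S(4) beforeD(3)[OF ay] by blast
  then obtain m where m: "m \<in> S - {y}" "\<And>q. q \<in> S - {y} - {m} \<Longrightarrow> chi m y q = 1"
    using finite_has_extreme_from[of "S - {y}" y] y(2) S(1) by blast
  have my: "m \<prec> y" using y(2) m(1) by blast
  have left: "q = y \<or> chi m y q = 1" if "q \<in> S" "q \<noteq> m" for q
    using m(2) that by blast
  consider "m \<prec> x" | "m = x" | "x \<prec> m"
    using before_total[of m x] m(1) S(2,3) by blast
  then show ?case
  proof cases
    case 1
    have "chi m y x = 1" using left[of x] S(3) beforeD(3)[OF 1] beforeD(3)[OF xy] by blast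
    then have "exit_edge S x m y" unfolding exit_edge_def using m y(1) 1 xy by blast
    then show ?thesis by blast
  next
    case 2
    have "chi x y a = 1" using left[of a] 2 S(4) beforeD(3)[OF ax] beforeD(3)[OF ay] by blast
    moreover have "b = y \<or> chi x y b = 1" using left[of b] 2 S(5) beforeD(3)[OF xb] by blast
    ultimately show ?thesis using blocked_not_extreme[OF ax xb abx xy] by blast
  next
    case 3
    define S' where "S' = {q \<in> S. q = m \<or> q \<prec> m}"
    have S'S: "S' \<subseteq> S" unfolding S'_def by blast
    have S': "finite S'" "S' \<subseteq> X" "x \<in> S'" "a \<in> S'"
      using finite_subset[OF S'S S(1)] S'S S(2-4) 3 before_trans[OF ax 3] unfolding S'_def by blast+
    have "y \<notin> S'" using m(1) before_asym[OF my] unfolding S'_def by blast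
    then have smaller: "card S' < card S" using psubset_card_mono[OF S(1)] S'S y(1) by blast
    have mx: "chi m y x = 1" using left[of x] S(3) beforeD(3)[OF 3] beforeD(3)[OF xy] by blast
    obtain b' where b': "b' \<in> S'" "x \<prec> b'" "chi a b' x = 1"
    proof (cases "b \<in> S'")
      case False
      then have mb: "m \<prec> b" using before_total[of m b] S(2,5) m(1) unfolding S'_def by blast
      have "b = y \<or> chi m y b = 1" using left[of b] S(5) beforeD(3)[OF mb] by blast
      then have "chi a m x = 1" using exit_shift[OF ax 3 mb abx my mx] by blast
      then show ?thesis using that[of m] 3 m(1) unfolding S'_def by blast
    qed (use that xb abx in blast)
    then obtain c d where "exit_edge S' x c d"
      using less.hyps[OF smaller S' _ ax] by blast
    then have "exit_edge S x c d"
      using exit_edge_extend[OF _ S(2) _ 3 my left] m(1) unfolding S'_def by blast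
    then show ?thesis by blast
  qed
qed

lemma blocked_by_hull_edge:
  assumes X: "x \<in> X" "a \<in> X" "b \<in> X" and blk: "blocks chi u a b x"
  shows "\<exists>c\<in>X. \<exists>d\<in>X. blocks chi u c d x \<and> hull_edge chi u X c d"
proof -
  have dist: "distinct [x,a,b]" and sides: "chi u x a = - chi u x b" and abx: "chi a b x = chi a b u"
    using blk unfolding blocks_def by blast+
  obtain a' b' where "a' \<in> X" "b' \<in> X" "a' \<prec> x" "x \<prec> b'" "chi a' b' x = 1"
  proof (cases "x \<prec> b")
    case True
    then have "a \<prec> x" using sides beforeD(6)[OF True] before_total[of a x] beforeD(6)[of x a] X dist
      by fastforce
    then have "chi a b x = 1" using abx beforeD(7) before_trans True by metis
    then show ?thesis using that \<open>a \<prec> x\<close> True X by blast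
  next
    case False
    then have bx: "b \<prec> x" using before_total[of b x] X dist by auto
    then have xa: "x \<prec> a"
      using sides beforeD(9)[OF bx] before_total[of a x] beforeD(9)[of a x] X dist by fastforce
    have "chi b a x = - chi a b x" "chi b a u = - chi a b u"
      using chirotope_alternating(4)[OF chirotope, of a b x]
        chirotope_alternating(4)[OF chirotope, of a b u] X dist root_notin by auto
    then have "chi b a x = 1" using abx beforeD(7) before_trans[OF bx xa] by auto
    then show ?thesis using that bx xa X by blast
  qed
  moreover have "finite X" using chirotope_finite[OF chirotope] by simp
  ultimately obtain c d where "exit_edge X x c d"
    using exit_edge_exists[of X x] X(1) by blast
  then have cd: "c \<in> X" "d \<in> X" "c \<prec> x" "x \<prec> d" "chi c d x = 1" "\<forall>q\<in>X - {c,d}. chi c d q = 1"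
    unfolding exit_edge_def by blast+
  have "c \<prec> d" using before_trans cd by blast
  then have "blocks chi u c d x" "hull_edge chi u X c d"
    using cd beforeD[OF \<open>c \<prec> d\<close>] beforeD[OF \<open>c \<prec> x\<close>] beforeD[OF \<open>x \<prec> d\<close>]
    unfolding blocks_def hull_edge_def by auto
  then show ?thesis using cd by blast
qed

end

lemma blocks_uminus: "blocks (\<lambda>a b c. - chi a b c) u a b x = blocks chi u a b x"
  unfolding blocks_def by auto

lemma hull_edge_uminus: "hull_edge (\<lambda>a b c. - chi a b c) u S c d = hull_edge chi u S c d"
  unfolding hull_edge_def by auto

lemma rooted_blocked_by_hull_edge:
  assumes rc: "rooted_chirotope chi X u" and X: "x \<in> X" "a \<in> X" "b \<in> X"
    and blk: "blocks chi u a b x"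
  shows "\<exists>c\<in>X. \<exists>d\<in>X. blocks chi u c d x \<and> hull_edge chi u X c d"
proof -
  have uX: "u \<notin> X" and ch: "chirotope chi (insert u X)" using rc unfolding rooted_chirotope_def by auto
  obtain y0 s where y0: "y0 \<in> X" and ext: "\<And>z. z \<in> X - {y0} \<Longrightarrow> chi u y0 z = s"
    using rc unfolding rooted_chirotope_def by auto
  obtain z where z: "z \<in> X" "z \<noteq> y0" using blk X unfolding blocks_def by auto
  have "s = 1 \<or> s = -1"
    using chirotope_sign[OF ch, of u y0 z] ext[of z] z y0 uX by auto
  then show ?thesis
  proof
    assume "s = 1"
    then interpret angular_order chi X u y0 using ch uX y0 ext by unfold_locales auto
    show ?thesis using blocked_by_hull_edge[OF X blk] .
  next
    assume "s = -1"
    then interpret angular_order "\<lambda>a b c. - chi a b c" X u y0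
      using chirotope_uminus[OF ch] uX y0 ext by unfold_locales auto
    show ?thesis using blocked_by_hull_edge[OF X] blk blocks_uminus hull_edge_uminus by metis
  qed
qed

section \<open>Weak triangulations and visible points\<close>

lemma crossing_disjoint: "crossing f s1 s2 \<Longrightarrow> s1 \<inter> s2 = {}"
  unfolding crossing_def by auto

lemma crossing_commute: "crossing f s1 s2 \<longleftrightarrow> crossing f s2 s1"
  unfolding crossing_def by auto

lemma wcrossing_commute: "wcrossing chi u v s1 s2 \<longleftrightarrow> wcrossing chi u v s2 s1"
  unfolding wcrossing_def using crossing_commute by metis

lemma crossing_cong:
  assumes "\<And>p q r. p \<in> s1 \<union> s2 \<Longrightarrow> q \<in> s1 \<union> s2 \<Longrightarrow> r \<in> s1 \<union> s2 \<Longrightarrow> f p q r = g p q r"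
  shows "crossing f s1 s2 \<longleftrightarrow> crossing g s1 s2"
  unfolding crossing_def
proof (intro iffI; elim exE conjE)
  fix x y z t assume "s1 = {x, y}" "s2 = {z, t}" "distinct [x, y, z, t]"
    "f x y z = - f x y t" "f z t x = - f z t y"
  then show "\<exists>x y z t. s1 = {x, y} \<and> s2 = {z, t} \<and> distinct [x, y, z, t] \<and>
      g x y z = - g x y t \<and> g z t x = - g z t y" using assms by (metis Un_iff insertI1 insert_commute)
next
  fix x y z t assume "s1 = {x, y}" "s2 = {z, t}" "distinct [x, y, z, t]"
    "g x y z = - g x y t" "g z t x = - g z t y"
  then show "\<exists>x y z t. s1 = {x, y} \<and> s2 = {z, t} \<and> distinct [x, y, z, t] \<and>
      f x y z = - f x y t \<and> f z t x = - f z t y" using assms by (metis Un_iff insertI1 insert_commute)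
qed

lemma crossing_doubleton_iff:
  assumes "f a b c = - f b a c" "f a b d = - f b a d" "f c d a = - f d c a" "f c d b = - f d c b"
  shows "crossing f {a,b} {c,d} \<longleftrightarrow>
    distinct [a,b,c,d] \<and> f a b c = - f a b d \<and> f c d a = - f c d b"
proof
  assume "crossing f {a,b} {c,d}"
  then obtain x y z t where "{a,b} = {x,y}" "{c,d} = {z,t}" "distinct [x,y,z,t]"
    "f x y z = - f x y t" "f z t x = - f z t y"
    unfolding crossing_def by blast
  then show "distinct [a,b,c,d] \<and> f a b c = - f a b d \<and> f c d a = - f c d b"
    using assms unfolding doubleton_eq_iff by (elim disjE conjE) auto
qed (auto simp: crossing_def)

lemma triangulation_exists:
  assumes "finite E"
  shows "\<exists>T. triangulation chi E T"
proof -
  define F where "F = {T. T \<subseteq> {s. segment E s} \<and> (\<forall>s1\<in>T. \<forall>s2\<in>T. \<not> crossing chi s1 s2)}"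
  have "{s. segment E s} \<subseteq> Pow E" unfolding segment_def by blast
  then have "F \<subseteq> Pow (Pow E)" unfolding F_def by blast
  then have "finite F" using assms by (meson finite_Pow_iff finite_subset)
  moreover have "{} \<in> F" unfolding F_def by blast
  ultimately obtain T where TF: "T \<in> F" and max: "\<And>T'. T' \<in> F \<Longrightarrow> T \<subseteq> T' \<Longrightarrow> T = T'"
    using finite_has_maximal[of F] by blast
  have "triangulation chi E T"
    unfolding triangulation_def
  proof (intro conjI allI impI)
    show "\<forall>s\<in>T. segment E s" "\<forall>s1\<in>T. \<forall>s2\<in>T. \<not> crossing chi s1 s2"
      using TF unfolding F_def by blast+
  next
    fix s assume s: "segment E s \<and> s \<notin> T"
    show "\<exists>s'\<in>T. crossing chi s s' \<or> crossing chi s' s"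
    proof (rule ccontr)
      assume "\<not> (\<exists>s'\<in>T. crossing chi s s' \<or> crossing chi s' s)"
      moreover have "\<not> crossing chi s s"
        using crossing_disjoint s unfolding segment_def by blast
      ultimately have "insert s T \<in> F" using TF s unfolding F_def by blast
      then show False using max s by blast
    qed
  qed
  then show ?thesis by blast
qed

locale rooted_setting =
  fixes chi :: "'a \<Rightarrow> 'a \<Rightarrow> 'a \<Rightarrow> int" and X :: "'a set" and u v :: 'a
  assumes rooted: "rooted_chirotope chi X u" and v_notin: "v \<notin> X" and v_neq_u: "v \<noteq> u"
begin

lemma chirotope: "chirotope chi (insert u X)" and u_notin: "u \<notin> X"
  using rooted unfolding rooted_chirotope_def by auto

lemma finite_X: "finite X"
  using chirotope_finite[OF chirotope] by simp

definition visible :: "'a set" where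
  "visible = {x \<in> X. \<forall>a\<in>X. \<forall>b\<in>X. \<not> blocks chi u a b x}"

definition visible_edges :: "'a set set" where
  "visible_edges = (\<lambda>x. {v, x}) ` visible"

lemma visible_subset: "visible \<subseteq> X"
  unfolding visible_def by auto

lemma wcrossing_v_iff_blocks:
  assumes X: "x \<in> X" "a \<in> X" "b \<in> X"
  shows "wcrossing chi u v {v,x} {a,b} \<longleftrightarrow> blocks chi u a b x"
proof (cases "distinct [x,a,b]")
  case False
  then show ?thesis unfolding wcrossing_def crossing_def blocks_def doubleton_eq_iff by auto
next
  case True
  note alt = chirotope_alternating[OF chirotope]
  have ne: "u \<noteq> x" "u \<noteq> a" "u \<noteq> b" "v \<noteq> x" "v \<noteq> a" "v \<noteq> b"
    using X u_notin v_notin by auto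
  have "crossing (chi_v chi u v) {v,x} {a,b} \<longleftrightarrow>
      chi x a u = - chi x b u \<and> chi a b u = chi a b x"
    by (subst crossing_doubleton_iff)
      (use alt(4)[of x a u] alt(4)[of x b u] alt(4)[of a b u] alt(4)[of a b x] X True ne v_neq_u
        in \<open>auto simp: chi_v_def\<close>)
  moreover have "chi x a u = chi u x a" "chi x b u = chi u x b"
    using alt(1)[of u x a] alt(1)[of u x b] X True ne by auto
  ultimately show ?thesis
    unfolding wcrossing_def blocks_def using True ne v_neq_u by auto
qed

lemma weak_segment_v: "x \<in> X \<Longrightarrow> weak_segment X u v {v,x}"
  unfolding weak_segment_def segment_def using v_notin u_notin v_neq_u by (auto simp: doubleton_eq_iff)

lemma segment_weak_segment: "segment (insert u X) s \<Longrightarrow> weak_segment X u v s"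
  unfolding weak_segment_def segment_def using v_notin v_neq_u by (auto simp: doubleton_eq_iff)

lemma segment_v_notin: "segment (insert u X) s \<Longrightarrow> v \<notin> s"
  unfolding segment_def using v_notin v_neq_u by auto

lemma weak_segment_segment: "weak_segment X u v s \<Longrightarrow> v \<notin> s \<Longrightarrow> segment (insert u X) s"
  unfolding weak_segment_def segment_def by auto

lemma weak_segment_v_cases:
  assumes "weak_segment X u v s" "v \<in> s"
  obtains x where "x \<in> X" "s = {v,x}"
  using assms v_notin unfolding weak_segment_def segment_def by (auto simp: doubleton_eq_iff)

lemma wcrossing_eq_crossing:
  assumes "v \<notin> s1" "v \<notin> s2"
  shows "wcrossing chi u v s1 s2 \<longleftrightarrow> crossing chi s1 s2"
proof -
  have "crossing (chi_v chi u v) s1 s2 \<longleftrightarrow> crossing chi s1 s2"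
    by (rule crossing_cong) (use assms in \<open>auto simp: chi_v_def\<close>)
  then show ?thesis unfolding wcrossing_def using assms by auto
qed

lemma visible_not_wcrossing:
  assumes x: "x \<in> visible" and s: "weak_segment X u v s"
  shows "\<not> wcrossing chi u v {v,x} s"
proof
  assume w: "wcrossing chi u v {v,x} s"
  obtain p q where pq: "s = {p,q}" "p \<in> X \<union> {u,v}" "q \<in> X \<union> {u,v}"
    using s unfolding weak_segment_def segment_def by auto
  have "crossing (chi_v chi u v) {v,x} s" "u \<notin> s" using w unfolding wcrossing_def by auto
  then have "v \<notin> s" "u \<notin> s" using crossing_disjoint by blast+
  then have "p \<in> X" "q \<in> X" using pq by auto
  moreover have "x \<in> X" using x visible_subset by blast
  ultimately have "blocks chi u p q x" using wcrossing_v_iff_blocks w pq(1) by blast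
  then show False using x \<open>p \<in> X\<close> \<open>q \<in> X\<close> unfolding visible_def by blast
qed

lemma visible_edges_subset:
  assumes D: "weak_triangulation chi X u v D"
  shows "visible_edges \<subseteq> D"
proof
  fix e assume "e \<in> visible_edges"
  then obtain x where x: "x \<in> visible" "e = {v,x}" unfolding visible_edges_def by blast
  show "e \<in> D"
  proof (rule ccontr)
    assume "e \<notin> D"
    moreover have "weak_segment X u v e" using weak_segment_v x visible_subset by auto
    ultimately obtain s where s: "s \<in> D" "wcrossing chi u v e s \<or> wcrossing chi u v s e"
      using D unfolding weak_triangulation_def by blast
    then have "wcrossing chi u v e s" using wcrossing_commute[of chi u v s e] by blast
    moreover have "weak_segment X u v s" using D s(1) unfolding weak_triangulation_def by blast
    ultimately show False using visible_not_wcrossing[OF x(1)] x(2) by blast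
  qed
qed

lemma hull_edge_in_triangulation:
  assumes T: "triangulation chi (insert u X) T" and X: "c \<in> X" "d \<in> X"
    and hull: "hull_edge chi u X c d"
  shows "{c,d} \<in> T"
proof (rule ccontr)
  assume "{c,d} \<notin> T"
  have u: "distinct [c,d,u]" using X u_notin hull unfolding hull_edge_def by auto
  have cd: "c \<noteq> d" and side: "\<And>q. q \<in> X - {c,d} \<Longrightarrow> chi c d q = chi c d u"
    using hull unfolding hull_edge_def by auto
  have "segment (insert u X) {c,d}" unfolding segment_def using X cd by blast
  then obtain s where "s \<in> T" "crossing chi {c,d} s \<or> crossing chi s {c,d}"
    using T \<open>{c,d} \<notin> T\<close> unfolding triangulation_def by blast
  then have cr: "crossing chi {c,d} s" using crossing_commute[of chi s "{c,d}"] by blast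
  have "segment (insert u X) s" using T \<open>s \<in> T\<close> unfolding triangulation_def by blast
  then obtain z t where zt: "s = {z,t}" "z \<in> insert u X" "t \<in> insert u X" "z \<noteq> t"
    unfolding segment_def by blast
  have "{c,d} \<inter> {z,t} = {}" using crossing_disjoint[OF cr] zt(1) by simp
  then have dist: "distinct [c,d,z,t]" using zt(4) cd by auto
  note alt = chirotope_alternating(4)[OF chirotope]
  have "chi c d z = - chi d c z" "chi c d t = - chi d c t" "chi z t c = - chi t z c"
    "chi z t d = - chi t z d"
    using alt[of c d z] alt[of c d t] alt[of z t c] alt[of z t d] X zt dist by auto
  then have "chi c d z = - chi c d t"
    using cr zt(1) crossing_doubleton_iff[of chi c d z t] by blast
  moreover have "chi c d z = chi c d u" "chi c d t = chi c d u"
    using side[of z] side[of t] zt dist by auto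
  moreover have "chi c d u \<noteq> 0" using chirotope_sign[OF chirotope, of c d u] X u by auto
  ultimately show False by simp
qed

lemma triangulation_v_notin: "triangulation chi (insert u X) T \<Longrightarrow> s \<in> T \<Longrightarrow> v \<notin> s"
  using segment_v_notin unfolding triangulation_def by blast

lemma triangulation_weak_segment:
  "triangulation chi (insert u X) T \<Longrightarrow> s \<in> T \<Longrightarrow> weak_segment X u v s"
  using segment_weak_segment unfolding triangulation_def by blast

lemma triangulation_misses_iff_visible:
  assumes T: "triangulation chi (insert u X) T" and x: "x \<in> X"
  shows "(\<forall>s\<in>T. \<not> wcrossing chi u v {v,x} s \<and> \<not> wcrossing chi u v s {v,x}) \<longleftrightarrow> x \<in> visible"
proof
  assume "x \<in> visible"
  show "\<forall>s\<in>T. \<not> wcrossing chi u v {v,x} s \<and> \<not> wcrossing chi u v s {v,x}"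
  proof
    fix s assume "s \<in> T"
    then have "\<not> wcrossing chi u v {v,x} s"
      using visible_not_wcrossing[OF \<open>x \<in> visible\<close>] triangulation_weak_segment[OF T] by blast
    then show "\<not> wcrossing chi u v {v,x} s \<and> \<not> wcrossing chi u v s {v,x}"
      using wcrossing_commute[of chi u v s "{v,x}"] by blast
  qed
next
  assume misses: "\<forall>s\<in>T. \<not> wcrossing chi u v {v,x} s \<and> \<not> wcrossing chi u v s {v,x}"
  show "x \<in> visible"
  proof (rule ccontr)
    assume "x \<notin> visible"
    then obtain a b where "a \<in> X" "b \<in> X" "blocks chi u a b x" using x unfolding visible_def by blast
    then obtain c d where cd: "c \<in> X" "d \<in> X" "blocks chi u c d x" "hull_edge chi u X c d"
      using rooted_blocked_by_hull_edge[OF rooted x] by blast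
    then have "{c,d} \<in> T" using hull_edge_in_triangulation[OF T] by blast
    moreover have "wcrossing chi u v {v,x} {c,d}"
      using wcrossing_v_iff_blocks[OF x cd(1,2)] cd(3) by blast
    ultimately show False using misses by blast
  qed
qed

lemma extension_eq:
  assumes T: "triangulation chi (insert u X) T"
  shows "extension chi X u v T = T \<union> visible_edges"
proof -
  have "{{v, x} | x. x \<in> X \<and> (\<forall>s\<in>T. \<not> wcrossing chi u v {v, x} s \<and> \<not> wcrossing chi u v s {v, x})}
      = (\<lambda>x. {v, x}) ` {x \<in> X. x \<in> visible}"
    using triangulation_misses_iff_visible[OF T] by auto
  also have "\<dots> = visible_edges" using visible_subset unfolding visible_edges_def by auto
  finally show ?thesis unfolding extension_def by simp
qed

lemma extension_noncrossing:
  assumes T: "triangulation chi (insert u X) T"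
    and s1: "s1 \<in> T \<union> visible_edges" and s2: "s2 \<in> T \<union> visible_edges"
  shows "\<not> wcrossing chi u v s1 s2"
proof (cases "s1 \<in> T \<and> s2 \<in> T")
  case True
  then have "\<not> crossing chi s1 s2" using T unfolding triangulation_def by blast
  then show ?thesis using wcrossing_eq_crossing triangulation_v_notin[OF T] True by blast
next
  case False
  show ?thesis
  proof (cases "s1 \<in> visible_edges \<and> s2 \<in> visible_edges")
    case True
    then have "v \<in> s1 \<inter> s2" unfolding visible_edges_def by blast
    then show ?thesis using crossing_disjoint unfolding wcrossing_def by blast
  next
    case False
    then obtain x s where x: "x \<in> visible" and "s \<in> T"
      and s12: "(s1 = {v,x} \<and> s2 = s) \<or> (s1 = s \<and> s2 = {v,x})"
      using \<open>\<not> (s1 \<in> T \<and> s2 \<in> T)\<close> s1 s2 unfolding visible_edges_def by blast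
    then have "\<not> wcrossing chi u v {v,x} s"
      using visible_not_wcrossing triangulation_weak_segment[OF T] by blast
    then show ?thesis using s12 wcrossing_commute[of chi u v s "{v,x}"] by blast
  qed
qed

lemma extension_maximal:
  assumes T: "triangulation chi (insert u X) T"
    and s: "weak_segment X u v s" "s \<notin> T \<union> visible_edges"
  shows "\<exists>s'\<in>T \<union> visible_edges. wcrossing chi u v s s' \<or> wcrossing chi u v s' s"
proof (cases "v \<in> s")
  case True
  then obtain x where x: "x \<in> X" "s = {v,x}" using weak_segment_v_cases s(1) by blast
  then have "x \<notin> visible" using s(2) unfolding visible_edges_def by blast
  then show ?thesis using triangulation_misses_iff_visible[OF T x(1)] x(2) by blast
next
  case False
  then have "segment (insert u X) s" using weak_segment_segment s(1) by blast
  then obtain s' where "s' \<in> T" "crossing chi s s' \<or> crossing chi s' s"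
    using T s(2) unfolding triangulation_def by blast
  then show ?thesis using wcrossing_eq_crossing triangulation_v_notin[OF T] False by blast
qed

lemma extension_weak_triangulation:
  assumes T: "triangulation chi (insert u X) T"
  shows "weak_triangulation chi X u v (extension chi X u v T)"
  unfolding weak_triangulation_def extension_eq[OF T]
proof (intro conjI ballI allI impI)
  show "weak_segment X u v s" if "s \<in> T \<union> visible_edges" for s
    using that triangulation_weak_segment[OF T] weak_segment_v visible_subset
    unfolding visible_edges_def by blast
qed (use extension_noncrossing[OF T] extension_maximal[OF T] in blast)+

lemma weak_triangulation_subset:
  assumes "weak_triangulation chi X u v D"
  shows "D \<subseteq> Pow (X \<union> {u,v})"
proof
  fix s assume "s \<in> D"
  then have "weak_segment X u v s" using assms unfolding weak_triangulation_def by blast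
  then show "s \<in> Pow (X \<union> {u,v})" unfolding weak_segment_def segment_def by blast
qed

lemma finite_weak_triangulation: "weak_triangulation chi X u v D \<Longrightarrow> finite D"
  using finite_subset[OF weak_triangulation_subset] finite_X by simp

lemma card_visible_edges: "card visible_edges = card visible"
proof -
  have "inj_on (\<lambda>x. {v,x}) visible"
    using visible_subset v_notin by (auto intro!: inj_onI simp: doubleton_eq_iff)
  then show ?thesis unfolding visible_edges_def by (rule card_image)
qed

lemma degree_extension:
  assumes T: "triangulation chi (insert u X) T"
  shows "degree (extension chi X u v T) v = card visible"
proof -
  have "{s \<in> T \<union> visible_edges. v \<in> s} = visible_edges"
    using triangulation_v_notin[OF T] unfolding visible_edges_def by blast
  then show ?thesis unfolding degree_def extension_eq[OF T] using card_visible_edges by simp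
qed

lemma visible_edges_subset_v_edges:
  "weak_triangulation chi X u v D \<Longrightarrow> visible_edges \<subseteq> {s \<in> D. v \<in> s}"
  using visible_edges_subset unfolding visible_edges_def by blast

lemma card_visible_le_degree:
  assumes D: "weak_triangulation chi X u v D"
  shows "card visible \<le> degree D v"
  unfolding degree_def card_visible_edges[symmetric]
  by (rule card_mono) (use finite_weak_triangulation[OF D] visible_edges_subset_v_edges[OF D] in auto)

lemma min_v_degree_eq: "min_v_degree chi X u v = card visible"
  unfolding min_v_degree_def
proof (rule Min_eqI)
  have "{degree D v |D. weak_triangulation chi X u v D} \<subseteq> (\<lambda>D. degree D v) ` Pow (Pow (X \<union> {u,v}))"
    using weak_triangulation_subset by blast
  then show "finite {degree D v |D. weak_triangulation chi X u v D}"
    using finite_X by (simp add: finite_subset)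
  show "y \<ge> card visible" if "y \<in> {degree D v |D. weak_triangulation chi X u v D}" for y
    using that card_visible_le_degree by blast
  obtain T where T: "triangulation chi (insert u X) T"
    using triangulation_exists[OF chirotope_finite[OF chirotope]] by blast
  then show "card visible \<in> {degree D v |D. weak_triangulation chi X u v D}"
    using extension_weak_triangulation[OF T] degree_extension[OF T] by (auto intro!: exI)
qed

lemma v_edges_eq_visible_edges:
  assumes D: "weak_triangulation chi X u v D" and deg: "degree D v = card visible"
  shows "{s \<in> D. v \<in> s} = visible_edges"
proof -
  have "finite {s \<in> D. v \<in> s}" using finite_weak_triangulation[OF D] by simp
  then show ?thesis
    using card_subset_eq visible_edges_subset_v_edges[OF D] deg card_visible_edges
    unfolding degree_def by metis
qed

lemma triangulation_v_free_part:
  assumes D: "weak_triangulation chi X u v D" and Dv: "{s \<in> D. v \<in> s} = visible_edges"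
  shows "triangulation chi (insert u X) {s \<in> D. v \<notin> s}"
  unfolding triangulation_def
proof (intro conjI allI impI ballI)
  fix s assume "s \<in> {s \<in> D. v \<notin> s}"
  then show "segment (insert u X) s"
    using D weak_segment_segment unfolding weak_triangulation_def by blast
next
  fix s1 s2 assume "s1 \<in> {s \<in> D. v \<notin> s}" "s2 \<in> {s \<in> D. v \<notin> s}"
  then show "\<not> crossing chi s1 s2"
    using D wcrossing_eq_crossing unfolding weak_triangulation_def by blast
next
  fix s assume s: "segment (insert u X) s \<and> s \<notin> {s \<in> D. v \<notin> s}"
  then have vs: "v \<notin> s" and ws: "weak_segment X u v s" and "s \<notin> D"
    using segment_v_notin segment_weak_segment by blast+
  then obtain s' where s': "s' \<in> D" "wcrossing chi u v s s' \<or> wcrossing chi u v s' s"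
    using D unfolding weak_triangulation_def by blast
  then have "wcrossing chi u v s' s" using wcrossing_commute[of chi u v s s'] by blast
  moreover have "v \<notin> s'"
  proof
    assume "v \<in> s'"
    then obtain x where "x \<in> visible" "s' = {v,x}" using Dv s'(1) unfolding visible_edges_def by blast
    then show False using visible_not_wcrossing ws \<open>wcrossing chi u v s' s\<close> by blast
  qed
  ultimately show "\<exists>s'\<in>{s \<in> D. v \<notin> s}. crossing chi s s' \<or> crossing chi s' s"
    using wcrossing_eq_crossing[OF _ vs] s'(1) by blast
qed

lemma min_degree_weak_triangulation_is_extension:
  assumes D: "weak_triangulation chi X u v D" and deg: "degree D v = card visible"
  shows "\<exists>T. triangulation chi (insert u X) T \<and> D = extension chi X u v T"
proof -
  have Dv: "{s \<in> D. v \<in> s} = visible_edges" using v_edges_eq_visible_edges[OF D deg] .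
  then have "D = {s \<in> D. v \<notin> s} \<union> visible_edges" by blast
  then show ?thesis
    using triangulation_v_free_part[OF D Dv] extension_eq by metis
qed

end

theorem lemma3p2:
  fixes chi :: "'a \<Rightarrow> 'a \<Rightarrow> 'a \<Rightarrow> int" and X :: "'a set" and u v :: 'a
    and D :: "'a set set"
  assumes "rooted_chirotope chi X u"
    and "v \<notin> X" and "v \<noteq> u"
    and "weak_triangulation chi X u v D"
  shows "(\<exists>T. triangulation chi (insert u X) T \<and> D = extension chi X u v T)
         \<longleftrightarrow> degree D v = min_v_degree chi X u v"
proof -
  interpret rooted_setting chi X u v using assms(1-3) by unfold_locales
  show ?thesis
  proof
    assume "\<exists>T. triangulation chi (insert u X) T \<and> D = extension chi X u v T"
    then obtain T where "triangulation chi (insert u X) T" "D = extension chi X u v T" by blast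
    then show "degree D v = min_v_degree chi X u v" using degree_extension min_v_degree_eq by simp
  next
    assume "degree D v = min_v_degree chi X u v"
    then show "\<exists>T. triangulation chi (insert u X) T \<and> D = extension chi X u v T"
      using min_degree_weak_triangulation_is_extension[OF assms(4)] min_v_degree_eq by simp
  qed
qed

end
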